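(* Let $Q$ be a regular $k$-gon centered at the origin, and let $p,q$ be two points in general position with respect to $Q$. Then the breakpoints along the bisector $b_{pq}$ correspond alternatingly to corner placements at $p$ and corner placements at $q$.
   Context: A homothetic placement of $Q$ is $x+\lambda Q$ ($\lambda>0$, center $x$). $d_Q(x,y)=\min\{\lambda\ge0:y\in x+\lambda Q\}$; the bisector $b_{pq}=\{x:d_Q(x,p)=d_Q(x,q)\}$ is the locus of centers of placements whose boundary contains $p$ and $q$. General position of $p,q$ with respect to $Q$ means the line $pq$ is not parallel to any edge or diagonal of $Q$; then $b_{pq}$ is a polygonal curve whose maximal segments (edgelets) consist of centers of placements in which $p$ and $q$ lie in the relative interiors of two fixed edges. The breakpoints of $b_{pq}$ are the common endpoints of consecutive edgelets; each is the center of a corner placement, i.e. a placement touching $p$ and $q$ in which one of the two points lies at a vertex of the placement (a corner placement at $p$, resp. at $q$, if $p$, resp. $q$, is at the vertex). *)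

theory Defs
  imports "HOL-Analysis.Analysis"
begin

text \<open>The regular k-gon centered at the
origin with first vertex c (c encodes circumradius and rotation) has vertices
vtx k c j = c * cis(2 pi j / k), j = 0..k-1 (indices are periodic mod k).\<close>

definition vtx :: "nat \<Rightarrow> complex \<Rightarrow> nat \<Rightarrow> complex" where
  "vtx k c j = c * cis (2 * pi * real j / real k)"

definition regular_polygon :: "nat \<Rightarrow> complex \<Rightarrow> complex set" where
  "regular_polygon k c = convex hull (vtx k c ` {..<k})"

definition placement :: "complex \<Rightarrow> real \<Rightarrow> complex set \<Rightarrow> complex set" where
  "placement x l S = (\<lambda>z. x + l *\<^sub>R z) ` S"

definition dQ :: "complex set \<Rightarrow> complex \<Rightarrow> complex \<Rightarrow> real" where
  "dQ Q x y = Inf {l. l \<ge> 0 \<and> y \<in> placement x l Q}"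

definition bisector :: "complex set \<Rightarrow> complex \<Rightarrow> complex \<Rightarrow> complex set" where
  "bisector Q p q = {x. dQ Q x p = dQ Q x q}"

text \<open>General position: p \<noteq> q and the line pq is not parallel to any edge or diagonal,
i.e. to the segment between any two distinct vertices.\<close>
definition general_position :: "nat \<Rightarrow> complex \<Rightarrow> complex \<Rightarrow> complex \<Rightarrow> bool" where
  "general_position k c p q \<longleftrightarrow> p \<noteq> q \<and>
     (\<forall>i<k. \<forall>j<k. i \<noteq> j \<longrightarrow> \<not> (\<exists>t::real. q - p = t *\<^sub>R (vtx k c i - vtx k c j)))"

text \<open>Centers of placements touching p and q with p in the relative interior of edge i
and q in the relative interior of edge j (edge i joins vertices i and i+1).\<close>
definition edgelet_set :: "nat \<Rightarrow> complex \<Rightarrow> complex \<Rightarrow> complex \<Rightarrow> nat \<Rightarrow> nat \<Rightarrow> complex set" where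
  "edgelet_set k c p q i j = {x \<in> bisector (regular_polygon k c) p q.
      p \<in> placement x (dQ (regular_polygon k c) x p) (open_segment (vtx k c i) (vtx k c (Suc i))) \<and>
      q \<in> placement x (dQ (regular_polygon k c) x q) (open_segment (vtx k c j) (vtx k c (Suc j)))}"

text \<open>Edgelets: the (nonempty) maximal segments of centers with p, q in the relative
interiors of two fixed edges.\<close>
definition edgelets :: "nat \<Rightarrow> complex \<Rightarrow> complex \<Rightarrow> complex \<Rightarrow> complex set set" where
  "edgelets k c p q = {edgelet_set k c p q i j | i j. i < k \<and> j < k \<and> edgelet_set k c p q i j \<noteq> {}}"

text \<open>Breakpoints: common endpoints of two distinct (hence consecutive) edgelets.\<close>
definition breakpoint :: "nat \<Rightarrow> complex \<Rightarrow> complex \<Rightarrow> complex \<Rightarrow> complex \<Rightarrow> bool" where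
  "breakpoint k c p q x \<longleftrightarrow>
     (\<exists>E1\<in>edgelets k c p q. \<exists>E2\<in>edgelets k c p q. E1 \<noteq> E2 \<and> x \<in> closure E1 \<and> x \<in> closure E2)"

definition corner_at :: "nat \<Rightarrow> complex \<Rightarrow> complex \<Rightarrow> complex \<Rightarrow> complex \<Rightarrow> complex \<Rightarrow> bool" where
  "corner_at k c p q z x \<longleftrightarrow> x \<in> bisector (regular_polygon k c) p q \<and>
     (\<exists>i<k. z = x + dQ (regular_polygon k c) x z *\<^sub>R vtx k c i)"

end

theory Submission
  imports Defs
begin

text \<open>The convex distance of the regular k-gon Q is the gauge of Q, the maximum of the k linear
functionals given by the outer edge normals. Where neither point is at a vertex, the edges carrying p and q are locally constant
(the competing normal inequalities are strict), so a corner-free piece of the bisector lies in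
one edgelet; and a corner inside an arc without breakpoints is impossible, because the arc
would reach the corner along a line from the same side twice. Hence consecutive breakpoints
bound a single closed edgelet. At a breakpoint two edgelets meet, which puts p or q at a vertex,
and general position rules out both. Finally, two corners of the same kind on one closed
edgelet coincide, by a rigidity property of chords of a regular polygon, so the kinds
alternate.\<close>

lemma cos_multiple_pi_div_le:
  fixes s :: int and k :: nat
  assumes "1 \<le> s" "s \<le> k"
  shows "cos (s * pi / k) \<le> cos (pi / k)"
    and "cos (s * pi / k) = cos (pi / k) \<Longrightarrow> s = 1"
proof -
  have k: "real k > 0" using assms by linarith
  have bounds: "0 \<le> s * pi / k" "s * pi / k \<le> pi" "0 \<le> pi / k" "pi / k \<le> pi"
    using assms k by (auto simp: field_simps)
  have "pi / k \<le> s * pi / k" using assms k by (simp add: divide_right_mono)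
  then show "cos (s * pi / k) \<le> cos (pi / k)" using cos_mono_le_eq[OF bounds] by simp
  assume "cos (s * pi / k) = cos (pi / k)"
  then have "\<not> pi / k < s * pi / k" using cos_mono_less_eq[OF bounds] by simp
  then have "s * pi / k \<le> pi / k" by simp
  then have "s * pi \<le> pi" using k by (simp add: divide_le_cancel)
  then show "s = 1" using assms by simp
qed

lemma cos_odd_multiple_pi_div_le:
  fixes n :: int and k :: nat
  assumes "1 \<le> k" "odd n"
  shows "cos (n * pi / k) \<le> cos (pi / k)"
    and "cos (n * pi / k) = cos (pi / k)
      \<Longrightarrow> n mod (2 * int k) = 1 \<or> n mod (2 * int k) = 2 * int k - 1"
proof -
  define r where "r = n mod (2 * int k)"
  define s where "s = min r (2*k - r)"
  have r: "0 \<le> r" "r < 2*k" using assms unfolding r_def by simp_all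
  have "odd r" using assms unfolding r_def by (simp add: dvd_mod_iff)
  with r have "r \<noteq> 0" by auto
  define m where "m = n div (2 * int k)"
  have "n = 2*k*m + r" unfolding r_def m_def by simp
  then have "n * pi / k = r * pi / k + 2 * pi * real_of_int m"
    using assms by (simp add: field_simps)
  then have "cos (n * pi / k) = cos (r * pi / k + 2 * pi * real_of_int m)" by simp
  also have "\<dots> = cos (r * pi / k)" by (simp add: cos_add)
  also have "\<dots> = cos (s * pi / k)"
  proof -
    have "(2*k - r) * pi / k = 2 * pi - r * pi / k" using assms by (simp add: field_simps)
    then show ?thesis unfolding s_def by (cases "r \<le> 2*k - r") (auto simp: min_def)
  qed
  finally have cs: "cos (n * pi / k) = cos (s * pi / k)" .
  have s: "1 \<le> s" "s \<le> k" using r \<open>r \<noteq> 0\<close> unfolding s_def by auto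
  show "cos (n * pi / k) \<le> cos (pi / k)" using cs cos_multiple_pi_div_le(1)[OF s] by simp
  assume "cos (n * pi / k) = cos (pi / k)"
  then have "s = 1" using cs cos_multiple_pi_div_le(2)[OF s] by simp
  then show "n mod (2 * int k) = 1 \<or> n mod (2 * int k) = 2 * int k - 1"
    unfolding s_def r_def[symmetric] by auto
qed

lemma cis_conic_combination:
  assumes "sin A \<noteq> 0"
  shows "cis \<phi> = (sin (A - \<phi>) / sin A) *\<^sub>R 1 + (sin \<phi> / sin A) *\<^sub>R cis A"
  using assms by (simp add: complex_eq_iff sin_diff field_simps)

lemma continuous_on_Max_image:
  fixes F :: "'i \<Rightarrow> 'a::topological_space \<Rightarrow> 'b::linorder_topology"
  assumes "finite I" "I \<noteq> {}" "\<And>i. i \<in> I \<Longrightarrow> continuous_on S (F i)"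
  shows "continuous_on S (\<lambda>x. Max ((\<lambda>i. F i x) ` I))"
  using assms
proof (induction I rule: finite_ne_induct)
  case (insert i I)
  then have "continuous_on S (\<lambda>x. max (F i x) (Max ((\<lambda>i. F i x) ` I)))"
    by (intro continuous_on_max) auto
  then show ?case using insert by simp
qed simp

lemma combination_attains_bound:
  fixes a b h \<alpha> \<beta> :: real
  assumes "\<alpha> \<ge> 0" "\<beta> \<ge> 0" "a \<le> h" "b \<le> h" "\<alpha> * a + \<beta> * b = (\<alpha> + \<beta>) * h"
  shows "\<alpha> > 0 \<Longrightarrow> a = h" and "\<beta> > 0 \<Longrightarrow> b = h"
proof -
  have "\<alpha> * a \<le> \<alpha> * h" "\<beta> * b \<le> \<beta> * h" using assms by (simp_all add: mult_left_mono)
  moreover have "\<alpha> * a + \<beta> * b = \<alpha> * h + \<beta> * h" using assms(5) by (simp add: distrib_right)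
  ultimately have "\<alpha> * a = \<alpha> * h" "\<beta> * b = \<beta> * h" by linarith+
  then show "\<alpha> > 0 \<Longrightarrow> a = h" "\<beta> > 0 \<Longrightarrow> b = h" by auto
qed

lemma scaled_line_points_eq:
  fixes A D u :: "'a::real_vector"
  assumes "u = l *\<^sub>R (A + t *\<^sub>R D)" "u = m *\<^sub>R (A + t' *\<^sub>R D)" "\<And>r. u \<noteq> r *\<^sub>R D"
  shows "l = m"
proof (rule ccontr)
  assume "l \<noteq> m"
  have "(l - m) *\<^sub>R A = (m * t' - l * t) *\<^sub>R D" using assms(1,2) by (simp add: algebra_simps)
  then have "A = ((m * t' - l * t) / (l - m)) *\<^sub>R D"
    using \<open>l \<noteq> m\<close>
    by (metis (no_types, lifting) divide_inverse_commute eq_vector_fraction_iff right_minus_eq)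
  then have "u = (l * ((m * t' - l * t) / (l - m) + t)) *\<^sub>R D"
    using assms(1) by (simp add: algebra_simps)
  then show False using assms(3) by blast
qed

lemma complex_orthogonal_imp_parallel:
  fixes u N :: complex
  assumes "u \<bullet> N = 0" "N \<noteq> 0"
  obtains r where "u = r *\<^sub>R (\<i> * N)"
proof
  have o: "Re u * Re N + Im u * Im N = 0" using assms(1) by (simp add: inner_complex_def)
  have n0: "(Re N)^2 + (Im N)^2 \<noteq> 0"
    using assms(2) by (simp add: complex_eq_iff sum_power2_eq_zero_iff)
  have "Re u * ((Re N)^2 + (Im N)^2) = - (Im u * Re N - Re u * Im N) * Im N"
    "Im u * ((Re N)^2 + (Im N)^2) = (Im u * Re N - Re u * Im N) * Re N"
    using o by algebra+
  then show "u = (Im (u * cnj N) / (cmod N)^2) *\<^sub>R (\<i> * N)"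
    using n0 unfolding cmod_power2 by (simp add: complex_eq_iff field_simps)
qed

lemma closed_segment_param: "u \<in> closed_segment a b \<Longrightarrow> \<exists>t. u = a + t *\<^sub>R (b - a)"
  by (auto simp: in_segment algebra_simps)

lemma inner_ii_mult: "(\<i> * a) \<bullet> b = Im (cnj a * b)"
  by (simp add: inner_complex_def algebra_simps)

lemma injective_path_not_one_sided_on_line:
  fixes \<gamma> :: "real \<Rightarrow> complex"
  assumes cont: "continuous_on {a..b} \<gamma>" and inj: "inj_on \<gamma> {a..b}" and t0: "a < t0" "t0 < b"
    and line: "\<And>t. t \<in> {a..b} \<Longrightarrow> (\<gamma> t - \<gamma> t0) \<bullet> N = 0" and "N \<noteq> 0"
    and side: "\<And>t. t \<in> {a..b} \<Longrightarrow> t \<noteq> t0 \<Longrightarrow> A \<bullet> (\<gamma> t - \<gamma> t0) > 0"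
  shows False
proof -
  \<comment> \<open>g is injective because \<gamma> runs along a line on which A is not constant,
    yet g has a strict minimum at the interior point t0\<close>
  define g where "g t = A \<bullet> (\<gamma> t - \<gamma> t0)" for t
  have param: "\<exists>r. \<gamma> t - \<gamma> t0 = r *\<^sub>R (\<i> * N)" if "t \<in> {a..b}" for t
    using complex_orthogonal_imp_parallel[OF line[OF that] \<open>N \<noteq> 0\<close>] by metis
  have "A \<bullet> (\<i> * N) \<noteq> 0"
  proof -
    obtain r where "\<gamma> a - \<gamma> t0 = r *\<^sub>R (\<i> * N)" using param t0 by fastforce
    moreover have "A \<bullet> (\<gamma> a - \<gamma> t0) > 0" using side t0 by simp
    ultimately show ?thesis by auto
  qed
  have "continuous_on {a..b} g" unfolding g_def by (intro continuous_intros cont)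
  moreover have "inj_on g {a..b}"
  proof (rule inj_onI)
    fix s t assume st: "s \<in> {a..b}" "t \<in> {a..b}" "g s = g t"
    obtain r r' where "\<gamma> s - \<gamma> t0 = r *\<^sub>R (\<i> * N)" "\<gamma> t - \<gamma> t0 = r' *\<^sub>R (\<i> * N)"
      using param st(1,2) by metis
    moreover from this st(3) \<open>A \<bullet> (\<i> * N) \<noteq> 0\<close> have "r = r'" unfolding g_def by auto
    ultimately have "\<gamma> s - \<gamma> t0 = \<gamma> t - \<gamma> t0" by simp
    then have "\<gamma> s = \<gamma> t" by simp
    then show "s = t" using inj st(1,2) by (auto dest: inj_onD)
  qed
  ultimately have "(g a < g t0 \<and> g t0 < g b) \<or> (g b < g t0 \<and> g t0 < g a)"
    using t0 by (intro continuous_inj_imp_mono) auto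
  moreover have "g t0 = 0" "g a > 0" "g b > 0" using side t0 unfolding g_def by auto
  ultimately show False by auto
qed

lemma finite_if_subsingleton:
  assumes "\<And>x y. x \<in> S \<Longrightarrow> y \<in> S \<Longrightarrow> x = y"
  shows "finite S"
proof (cases "S = {}")
  case False
  then obtain x where "x \<in> S" by blast
  with assms have "S \<subseteq> {x}" by blast
  then show ?thesis by (rule finite_subset) simp
qed simp

lemma path_segment_in_closure:
  fixes \<gamma> :: "real \<Rightarrow> 'a::topological_space"
  assumes "continuous_on {a..b} \<gamma>" "a < b" "\<And>t. t \<in> {a<..<b} \<Longrightarrow> \<gamma> t \<in> E" "t \<in> {a..b}"
  shows "\<gamma> t \<in> closure E"
proof -
  have "continuous_on (closure {a<..<b}) \<gamma>" using assms(1,2) by simp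
  moreover have "\<gamma> ` {a<..<b} \<subseteq> closure E" using assms(3) closure_subset by blast
  ultimately have "\<gamma> ` closure {a<..<b} \<subseteq> closure E"
    by (rule image_closure_subset[OF _ closed_closure])
  then show ?thesis using assms(2,4) by auto
qed

section \<open>The regular k-gon and its gauge\<close>

locale regular_kgon =
  fixes k :: nat and c :: complex
  assumes three_le_k: "3 \<le> k" and c_nonzero: "c \<noteq> 0"
begin

abbreviation v :: "nat \<Rightarrow> complex" where "v \<equiv> vtx k c"

abbreviation Q :: "complex set" where "Q \<equiv> regular_polygon k c"

(* Edge m, from v m to v (Suc m), lies on the line normal m \<bullet> w = edge_level, and Q lies
   below all these lines. *)
definition normal :: "nat \<Rightarrow> complex" where
  "normal m = c * cis ((2 * m + 1) * pi / k)"

definition edge_level :: real where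
  "edge_level = (cmod c)^2 * cos (pi / k)"

lemma k_pos: "real k > 0"
  using three_le_k by simp

lemma edge_level_pos: "edge_level > 0"
proof -
  have "pi / k \<le> pi / 3" using three_le_k by (intro divide_left_mono) auto
  also have "\<dots> < pi / 2" by simp
  finally have "cos (pi / k) > 0" using k_pos by (intro cos_gt_zero) auto
  then show ?thesis unfolding edge_level_def using c_nonzero by simp
qed

lemma vtx_mod: "v (j mod k) = v j"
proof -
  obtain q where j: "j = k * q + j mod k" by (metis div_mult_mod_eq mult.commute)
  have "2 * pi * real j / k = 2 * pi * real (j mod k) / k + 2 * pi * real q"
    using k_pos by (subst j) (simp add: field_simps)
  then show ?thesis unfolding vtx_def by (simp add: cis_mult[symmetric])
qed

lemma Suc_mod_neq: "Suc i mod k \<noteq> i mod k" "Suc (Suc i) mod k \<noteq> i mod k"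
  using three_le_k by (auto simp: mod_eq_dvd_iff_nat dest: dvd_imp_le)

lemma inner_normal_vtx:
  "normal m \<bullet> v j = (cmod c)^2 * cos ((2 * int j - 2 * int m - 1) * pi / k)"
proof -
  have "2 * pi * j / k + - ((2 * m + 1) * pi / k) = (2 * int j - 2 * int m - 1) * pi / k"
    using k_pos by (simp add: field_simps)
  then have "cis (- ((2 * m + 1) * pi / k)) * cis (2 * pi * j / k)
      = cis ((2 * int j - 2 * int m - 1) * pi / k)"
    by (simp add: cis_mult)
  moreover have "cnj c * c = (cmod c)^2" using complex_norm_square[of c] by (simp add: mult.commute)
  ultimately have "cnj (normal m) * v j = (cmod c)^2 * cis ((2 * int j - 2 * int m - 1) * pi / k)"
    unfolding normal_def vtx_def by (simp add: cis_cnj algebra_simps)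
  then have "Re (cnj (normal m) * v j) = (cmod c)^2 * cos ((2 * int j - 2 * int m - 1) * pi / k)"
    by simp
  then show ?thesis by (simp add: inner_complex_def)
qed

lemma inner_normal_vtx_le: "normal m \<bullet> v j \<le> edge_level"
  unfolding inner_normal_vtx edge_level_def using three_le_k
  by (intro mult_left_mono cos_odd_multiple_pi_div_le) auto

lemma inner_normal_edge [simp]:
  "normal m \<bullet> v m = edge_level" "normal m \<bullet> v (Suc m) = edge_level"
  unfolding inner_normal_vtx edge_level_def by (simp_all add: algebra_simps)

lemma inner_normal_vtx_eq_imp:
  assumes "normal m \<bullet> v j = edge_level"
  shows "j mod k = m mod k \<or> j mod k = Suc m mod k"
proof -
  have "cos ((2 * int j - 2 * int m - 1) * pi / k) = cos (pi / k)"
    using assms c_nonzero unfolding inner_normal_vtx edge_level_def by simp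
  then have "(2 * int j - 2 * int m - 1) mod (2 * int k) = 1
      \<or> (2 * int j - 2 * int m - 1) mod (2 * int k) = 2 * int k - 1"
    using cos_odd_multiple_pi_div_le(2)[of k] three_le_k by auto
  moreover have "(1::int) mod (2 * int k) = 1" "(-1::int) mod (2 * int k) = 2 * int k - 1"
    using three_le_k by (simp_all add: zmod_minus1)
  ultimately have "(2 * int j - 2 * int m - 1) mod (2 * int k) = 1 mod (2 * int k)
      \<or> (2 * int j - 2 * int m - 1) mod (2 * int k) = (-1) mod (2 * int k)"
    by simp
  then have "2 * int k dvd (2 * int j - 2 * int m - 1) - 1
      \<or> 2 * int k dvd (2 * int j - 2 * int m - 1) - (-1)"
    by (simp only: mod_eq_dvd_iff)
  then have "2 * int k dvd 2 * (int j - int (Suc m)) \<or> 2 * int k dvd 2 * (int j - int m)"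
    by (simp add: algebra_simps)
  then have "int k dvd int j - int (Suc m) \<or> int k dvd int j - int m"
    by (metis dvd_times_left_cancel_iff zero_neq_numeral)
  then have "int j mod k = int (Suc m) mod k \<or> int j mod k = int m mod k"
    by (simp only: mod_eq_dvd_iff)
  then show ?thesis by (metis nat_int of_nat_mod)
qed

lemma edge_on_normal_line_imp:
  assumes "normal m \<bullet> v j = edge_level" "normal m \<bullet> v (Suc j) = edge_level"
  shows "j mod k = m mod k"
proof (rule ccontr)
  assume "j mod k \<noteq> m mod k"
  then have "j mod k = Suc m mod k" using inner_normal_vtx_eq_imp[OF assms(1)] by simp
  then have "Suc j mod k = Suc (Suc m) mod k" by (metis mod_Suc_eq)
  then show False
    using inner_normal_vtx_eq_imp[OF assms(2)] Suc_mod_neq[of m] Suc_mod_neq(1)[of "Suc m"] by auto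
qed

lemma inner_normal_vtx_swap:
  "normal i \<bullet> v j = normal j \<bullet> v (Suc i)" "normal i \<bullet> v (Suc j) = normal j \<bullet> v i"
proof -
  have "(2 * int (Suc i) - 2 * int j - 1) * pi / k = - ((2 * int j - 2 * int i - 1) * pi / k)"
    "(2 * int (Suc j) - 2 * int i - 1) * pi / k = - ((2 * int i - 2 * int j - 1) * pi / k)"
    using k_pos by (simp_all add: field_simps)
  then show "normal i \<bullet> v j = normal j \<bullet> v (Suc i)" "normal i \<bullet> v (Suc j) = normal j \<bullet> v i"
    unfolding inner_normal_vtx by (simp_all only: cos_minus)
qed

lemma cone_decomposition:
  assumes "w \<noteq> 0"
  obtains m \<alpha> \<beta> where "m < k" "\<alpha> \<ge> 0" "\<beta> \<ge> 0" "w = \<alpha> *\<^sub>R v m + \<beta> *\<^sub>R v (Suc m)"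
proof -
  define z where "z = w / c"
  define \<theta> where "\<theta> = Arg2pi z"
  define A where "A = 2 * pi / k"
  define m where "m = nat \<lfloor>\<theta> / A\<rfloor>"
  define \<phi> where "\<phi> = \<theta> - m * A"
  have \<theta>: "0 \<le> \<theta>" "\<theta> < 2 * pi" using Arg2pi unfolding \<theta>_def by auto
  have A: "0 < A" "A < pi" using three_le_k k_pos by (auto simp: A_def field_simps)
  have "m \<le> \<theta> / A" "\<theta> / A < m + 1"
    using \<theta> A unfolding m_def by (auto simp: of_nat_nat intro: floor_less_cancel)
  then have \<phi>: "0 \<le> \<phi>" "\<phi> < A" using A unfolding \<phi>_def by (auto simp: field_simps)
  have "\<theta> / A < k" using \<theta> k_pos unfolding A_def by (simp add: field_simps)
  with \<open>m \<le> \<theta> / A\<close> have "m < k" by linarith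
  have sA: "sin A > 0" using A by (intro sin_gt_zero)
  have "2 * pi * m / k = m * A" "2 * pi * Suc m / k = m * A + A"
    unfolding A_def using k_pos by (simp_all add: field_simps)
  then have "v m = c * cis (m * A)" "v (Suc m) = c * cis (m * A) * cis A"
    unfolding vtx_def by (simp_all add: cis_mult)
  moreover have "w = cmod z *\<^sub>R (c * cis (m * A) * cis \<phi>)"
  proof -
    have "z = cmod z *\<^sub>R cis \<theta>"
      using Arg2pi_eq[of z] unfolding \<theta>_def by (simp add: cis_conv_exp scaleR_conv_of_real)
    also have "cis \<theta> = cis (m * A) * cis \<phi>" unfolding \<phi>_def by (simp add: cis_mult)
    finally show ?thesis using c_nonzero unfolding z_def by (simp add: field_simps)
  qed
  ultimately have w_eq:
      "w = (cmod z * (sin (A - \<phi>) / sin A)) *\<^sub>R v m + (cmod z * (sin \<phi> / sin A)) *\<^sub>R v (Suc m)"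
    unfolding cis_conic_combination[of A \<phi>, OF sA[THEN less_imp_neq, symmetric]]
    by (simp add: algebra_simps scaleR_conv_of_real)
  moreover have "sin \<phi> \<ge> 0" "sin (A - \<phi>) \<ge> 0" using \<phi> A by (auto intro!: sin_ge_zero)
  ultimately show ?thesis
    using that[OF \<open>m < k\<close> _ _ w_eq] sA by (simp add: divide_nonneg_pos)
qed

definition qgauge :: "complex \<Rightarrow> real" where
  "qgauge w = Max ((\<lambda>m. normal m \<bullet> w) ` {..<k}) / edge_level"

lemma qgauge_ge: "m < k \<Longrightarrow> normal m \<bullet> w \<le> qgauge w * edge_level"
  unfolding qgauge_def using edge_level_pos by simp

lemma qgauge_attained:
  obtains m where "m < k" "normal m \<bullet> w = qgauge w * edge_level"
proof -
  have "Max ((\<lambda>m. normal m \<bullet> w) ` {..<k}) \<in> (\<lambda>m. normal m \<bullet> w) ` {..<k}"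
    using three_le_k by (intro Max_in) (auto simp: lessThan_empty_iff)
  then show ?thesis using that edge_level_pos unfolding qgauge_def by auto
qed

lemma continuous_on_qgauge: "continuous_on S qgauge"
  unfolding qgauge_def using three_le_k edge_level_pos
  by (intro continuous_intros continuous_on_Max_image) (auto simp: lessThan_empty_iff)

lemma qgauge_cone:
  assumes "m < k" "\<alpha> \<ge> 0" "\<beta> \<ge> 0" "w = \<alpha> *\<^sub>R v m + \<beta> *\<^sub>R v (Suc m)"
  shows "qgauge w = \<alpha> + \<beta>"
proof -
  have inner_w: "normal m' \<bullet> w = \<alpha> * (normal m' \<bullet> v m) + \<beta> * (normal m' \<bullet> v (Suc m))" for m'
    unfolding assms(4) by (simp add: inner_add_right)
  obtain m' where "m' < k" "normal m' \<bullet> w = qgauge w * edge_level" by (rule qgauge_attained)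
  moreover have "normal m' \<bullet> w \<le> (\<alpha> + \<beta>) * edge_level"
    unfolding inner_w distrib_right using assms
    by (intro add_mono mult_left_mono inner_normal_vtx_le) auto
  moreover have "(\<alpha> + \<beta>) * edge_level \<le> qgauge w * edge_level"
    using qgauge_ge[OF assms(1), of w] by (simp add: inner_w algebra_simps)
  ultimately show ?thesis using edge_level_pos by simp
qed

lemma qgauge_zero [simp]: "qgauge 0 = 0"
  using qgauge_cone[of 0 0 0 0] three_le_k by simp

lemma qgauge_pos:
  assumes "w \<noteq> 0"
  shows "qgauge w > 0"
proof -
  obtain m \<alpha> \<beta> where d: "m < k" "\<alpha> \<ge> 0" "\<beta> \<ge> 0" "w = \<alpha> *\<^sub>R v m + \<beta> *\<^sub>R v (Suc m)"
    using assms by (rule cone_decomposition)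
  with assms have "\<alpha> + \<beta> \<noteq> 0" by (auto simp: add_nonneg_eq_0_iff)
  then show ?thesis using qgauge_cone[OF d] d by simp
qed

lemma qgauge_nonneg: "qgauge w \<ge> 0"
  using qgauge_pos[of w] by (cases "w = 0") auto

lemma qgauge_scaleR: "r \<ge> 0 \<Longrightarrow> qgauge (r *\<^sub>R w) = r * qgauge w"
proof (cases "w = 0")
  case False
  then obtain m \<alpha> \<beta> where d: "m < k" "\<alpha> \<ge> 0" "\<beta> \<ge> 0" "w = \<alpha> *\<^sub>R v m + \<beta> *\<^sub>R v (Suc m)"
    by (rule cone_decomposition)
  assume "r \<ge> 0"
  then have "qgauge (r *\<^sub>R w) = r * \<alpha> + r * \<beta>"
    using d by (intro qgauge_cone) (auto simp: algebra_simps)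
  then show ?thesis using qgauge_cone[OF d] by (simp add: algebra_simps)
qed simp

lemma inner_normal_le_on_Q: "u \<in> Q \<Longrightarrow> normal m \<bullet> u \<le> edge_level"
proof -
  have "Q \<subseteq> {u. normal m \<bullet> u \<le> edge_level}"
    unfolding regular_polygon_def
    by (rule hull_minimal) (auto intro: inner_normal_vtx_le convex_halfspace_le)
  then show "u \<in> Q \<Longrightarrow> normal m \<bullet> u \<le> edge_level" by auto
qed

lemma qgauge_le_1_on_Q:
  assumes "u \<in> Q"
  shows "qgauge u \<le> 1"
proof -
  obtain m where "normal m \<bullet> u = qgauge u * edge_level" by (rule qgauge_attained)
  then have "qgauge u * edge_level \<le> 1 * edge_level"
    using inner_normal_le_on_Q[OF assms, of m] by simp
  then show ?thesis using edge_level_pos by simp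
qed

lemma vtx_in_Q: "v j \<in> Q"
  unfolding regular_polygon_def using three_le_k
  by (metis hull_inc image_eqI lessThan_iff mod_less_divisor vtx_mod zero_less_numeral
      less_le_trans)

lemma edge_subset_Q: "closed_segment (v j) (v (Suc j)) \<subseteq> Q"
  using vtx_in_Q unfolding regular_polygon_def by (intro closed_segment_subset) auto

lemma normalized_on_edge:
  assumes "w \<noteq> 0"
  obtains m where "m < k" "(1 / qgauge w) *\<^sub>R w \<in> closed_segment (v m) (v (Suc m))"
proof -
  obtain m \<alpha> \<beta> where d: "m < k" "\<alpha> \<ge> 0" "\<beta> \<ge> 0" "w = \<alpha> *\<^sub>R v m + \<beta> *\<^sub>R v (Suc m)"
    using assms by (rule cone_decomposition)
  have g: "qgauge w = \<alpha> + \<beta>" "qgauge w > 0" using qgauge_cone[OF d] qgauge_pos[OF assms] by auto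
  have "(1 / qgauge w) *\<^sub>R w = (1 - \<beta> / qgauge w) *\<^sub>R v m + (\<beta> / qgauge w) *\<^sub>R v (Suc m)"
    using d g by (simp add: field_simps scaleR_add_right)
  moreover have "0 \<le> \<beta> / qgauge w" "\<beta> / qgauge w \<le> 1" using d g by auto
  ultimately show ?thesis using that d(1) unfolding in_segment by blast
qed

lemma dQ_eq_qgauge: "dQ Q x y = qgauge (y - x)"
proof -
  have placement_iff: "y \<in> placement x l Q \<longleftrightarrow> (\<exists>u\<in>Q. y - x = l *\<^sub>R u)" for l
    unfolding placement_def by (auto simp: algebra_simps)
  have "y \<in> placement x (qgauge (y - x)) Q"
  proof (cases "y = x")
    case True
    then show ?thesis unfolding placement_iff using vtx_in_Q by auto
  next
    case False
    then obtain m where "(1 / qgauge (y - x)) *\<^sub>R (y - x) \<in> closed_segment (v m) (v (Suc m))"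
      using normalized_on_edge[of "y - x"] by auto
    then show ?thesis
      unfolding placement_iff using edge_subset_Q qgauge_pos[of "y - x"] False
      by (intro bexI[of _ "(1 / qgauge (y - x)) *\<^sub>R (y - x)"]) auto
  qed
  moreover have "qgauge (y - x) \<le> l" if "l \<ge> 0" and y: "y \<in> placement x l Q" for l
  proof -
    obtain u where "u \<in> Q" "y - x = l *\<^sub>R u" using y placement_iff by auto
    then show ?thesis
      using qgauge_scaleR[OF \<open>l \<ge> 0\<close>] qgauge_le_1_on_Q \<open>l \<ge> 0\<close>
      by (simp add: mult_left_le)
  qed
  ultimately show ?thesis
    unfolding dQ_def by (intro cInf_eq_minimum) (auto simp: qgauge_nonneg)
qed

lemma vtx_on_normal_line:
  "normal m \<bullet> v j = edge_level \<Longrightarrow> v j = v m \<or> v j = v (Suc m)"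
  by (metis inner_normal_vtx_eq_imp vtx_mod)

lemma closed_edge_on_normal_line:
  assumes "u \<in> closed_segment (v i) (v (Suc i))"
  shows "normal i \<bullet> u = edge_level"
proof -
  obtain t where "u = (1 - t) *\<^sub>R v i + t *\<^sub>R v (Suc i)" using assms by (auto simp: in_segment)
  then have "normal i \<bullet> u = (1 - t) * edge_level + t * edge_level" by (simp add: inner_add_right)
  then show ?thesis by (simp add: algebra_simps)
qed

lemma unit_gauge_on_normal_line:
  assumes "qgauge u = 1" "normal i \<bullet> u = edge_level"
  shows "u \<in> closed_segment (v i) (v (Suc i))"
proof -
  have "u \<noteq> 0" using assms(1) by auto
  then obtain m \<alpha> \<beta> where d: "m < k" "\<alpha> \<ge> 0" "\<beta> \<ge> 0" "u = \<alpha> *\<^sub>R v m + \<beta> *\<^sub>R v (Suc m)"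
    by (rule cone_decomposition)
  have "\<alpha> + \<beta> = 1" using qgauge_cone[OF d] assms(1) by simp
  then have "\<alpha> * (normal i \<bullet> v m) + \<beta> * (normal i \<bullet> v (Suc m)) = (\<alpha> + \<beta>) * edge_level"
    using assms(2) d(4) by (simp add: inner_add_right)
  note on_line = combination_attains_bound[OF d(2,3) inner_normal_vtx_le inner_normal_vtx_le this]
  consider "\<alpha> = 0" | "\<beta> = 0" | "\<alpha> > 0" "\<beta> > 0" using d by linarith
  then show ?thesis
  proof cases
    case 1
    then have "u = v (Suc m)" "\<beta> > 0" using d \<open>\<alpha> + \<beta> = 1\<close> by auto
    then show ?thesis using on_line(2) vtx_on_normal_line[of i "Suc m"] by auto
  next
    case 2
    then have "u = v m" "\<alpha> > 0" using d \<open>\<alpha> + \<beta> = 1\<close> by auto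
    then show ?thesis using on_line(1) vtx_on_normal_line[of i m] by auto
  next
    case 3
    then have "m mod k = i mod k" using on_line edge_on_normal_line_imp by blast
    then have "v m = v i" "v (Suc m) = v (Suc i)" by (metis vtx_mod mod_Suc_eq)+
    then have "u = (1 - \<beta>) *\<^sub>R v i + \<beta> *\<^sub>R v (Suc i)" "0 \<le> \<beta>" "\<beta> \<le> 1"
      using d \<open>\<alpha> + \<beta> = 1\<close> by (simp_all add: eq_diff_eq)
    then show ?thesis unfolding in_segment by blast
  qed
qed

lemma open_edge_on_normal_line_imp:
  assumes "u \<in> open_segment (v i) (v (Suc i))" "normal m \<bullet> u = edge_level"
  shows "i mod k = m mod k"
proof -
  obtain s where s: "0 < s" "s < 1" "u = (1 - s) *\<^sub>R v i + s *\<^sub>R v (Suc i)"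
    using assms(1) by (auto simp: in_segment)
  then have "(1 - s) * (normal m \<bullet> v i) + s * (normal m \<bullet> v (Suc i)) = ((1 - s) + s) * edge_level"
    using assms(2) by (simp add: inner_add_right)
  from combination_attains_bound[OF _ _ inner_normal_vtx_le inner_normal_vtx_le this] s
  have "normal m \<bullet> v i = edge_level" "normal m \<bullet> v (Suc i) = edge_level" by auto
  then show ?thesis by (rule edge_on_normal_line_imp)
qed

lemma closed_edge_on_other_normal_line:
  assumes "u \<in> closed_segment (v i) (v (Suc i))" "normal m \<bullet> u = edge_level" "i mod k \<noteq> m mod k"
  shows "u = v i \<or> u = v (Suc i)"
  using assms open_edge_on_normal_line_imp unfolding open_segment_def by blast

lemma vtx_Suc: "v (Suc i) = v i * cis (2 * pi / k)"
proof -
  have "2 * pi * Suc i / k = 2 * pi * i / k + 2 * pi / k" using k_pos by (simp add: field_simps)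
  then show ?thesis unfolding vtx_def by (simp add: cis_mult)
qed

lemma norm_edge_vec: "cmod (v (Suc i) - v i) = cmod c * cmod (cis (2 * pi / k) - 1)"
proof -
  have "v (Suc i) - v i = v i * (cis (2 * pi / k) - 1)" by (simp add: vtx_Suc algebra_simps)
  moreover have "cmod (v i) = cmod c" by (simp add: vtx_def norm_mult)
  ultimately show ?thesis by (simp add: norm_mult)
qed

lemma cis_step_neq_1: "cis (2 * pi / k) \<noteq> 1"
proof
  assume "cis (2 * pi / k) = 1"
  then have "cos (2 * pi / k) = cos 0" by (metis cis.sel(1) cos_zero one_complex.sel(1))
  moreover have "cos (2 * pi / k) < cos 0"
    using k_pos three_le_k by (subst cos_mono_less_eq) (auto simp: field_simps)
  ultimately show False by simp
qed

lemma open_edge_diff_neq_edge_vec: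
  assumes "u \<in> open_segment (v j) (v (Suc j))" "u' \<in> open_segment (v j) (v (Suc j))"
  shows "u - u' \<noteq> v (Suc i) - v i"
proof
  obtain s s' where s: "0 < s" "s < 1" "u = (1 - s) *\<^sub>R v j + s *\<^sub>R v (Suc j)"
    and s': "0 < s'" "s' < 1" "u' = (1 - s') *\<^sub>R v j + s' *\<^sub>R v (Suc j)"
    using assms by (auto simp: in_segment)
  assume "u - u' = v (Suc i) - v i"
  then have "(s - s') *\<^sub>R (v (Suc j) - v j) = v (Suc i) - v i"
    unfolding s s' by (simp add: algebra_simps)
  then have "\<bar>s - s'\<bar> * cmod (v (Suc j) - v j) = cmod (v (Suc i) - v i)" by (metis norm_scaleR)
  moreover have "cmod (v (Suc j) - v j) = cmod (v (Suc i) - v i)" "cmod (v (Suc i) - v i) \<noteq> 0"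
    using norm_edge_vec c_nonzero cis_step_neq_1 by simp_all
  ultimately have "\<bar>s - s'\<bar> = 1" by simp
  then show False using s s' by linarith
qed

lemma normal_neq:
  assumes "i mod k \<noteq> j mod k"
  shows "normal i \<noteq> normal j"
proof
  assume "normal i = normal j"
  then have "normal j \<bullet> v i = edge_level" "normal j \<bullet> v (Suc i) = edge_level"
    using inner_normal_edge[of i] by simp_all
  then have "i mod k = j mod k" by (rule edge_on_normal_line_imp)
  then show False using assms by simp
qed

lemma Im_cnj_vtx_mult_Suc: "Im (cnj (v i) * v (Suc i)) > 0"
proof -
  have "cnj (v i) * v i = (cmod c)^2"
    using complex_norm_square[of "v i"] by (simp add: vtx_def norm_mult mult.commute)
  then have "cnj (v i) * v (Suc i) = (cmod c)^2 * cis (2 * pi / k)"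
    unfolding vtx_Suc by (simp add: mult.assoc[symmetric])
  moreover have "sin (2 * pi / k) > 0"
    using k_pos three_le_k by (intro sin_gt_zero) (auto simp: field_simps)
  ultimately show ?thesis using c_nonzero by simp
qed

lemma vertex_beside_open_edge:
  assumes "V = v i \<or> V = v (Suc i)"
  obtains A where "A \<bullet> V = 0" "\<And>u. u \<in> open_segment (v i) (v (Suc i)) \<Longrightarrow> A \<bullet> u < 0"
proof -
  define X where "X = Im (cnj (v i) * v (Suc i))"
  have "X > 0" unfolding X_def by (rule Im_cnj_vtx_mult_Suc)
  have u: "\<exists>s. 0 < s \<and> s < 1 \<and> u = (1 - s) *\<^sub>R v i + s *\<^sub>R v (Suc i)"
    if "u \<in> open_segment (v i) (v (Suc i))" for u
    using that by (auto simp: in_segment)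
  show ?thesis
  proof (cases "V = v i")
    case True
    have "(- (\<i> * v i)) \<bullet> u < 0" if u_in: "u \<in> open_segment (v i) (v (Suc i))" for u
    proof -
      obtain s where s: "0 < s" "u = (1 - s) *\<^sub>R v i + s *\<^sub>R v (Suc i)" using u[OF u_in] by blast
      then have "Im (cnj (v i) * u) = s * X"
        unfolding s(2) X_def by (simp add: scaleR_conv_of_real algebra_simps)
      then show ?thesis using \<open>X > 0\<close> s(1) by (simp add: inner_ii_mult)
    qed
    then show ?thesis using that[of "- (\<i> * v i)"] True by (simp add: inner_ii_mult)
  next
    case False
    then have V: "V = v (Suc i)" using assms by simp
    have "(\<i> * v (Suc i)) \<bullet> u < 0" if u_in: "u \<in> open_segment (v i) (v (Suc i))" for u
    proof -
      obtain s where s: "s < 1" "u = (1 - s) *\<^sub>R v i + s *\<^sub>R v (Suc i)" using u[OF u_in] by blast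
      have "Im (cnj (v (Suc i)) * u) = - ((1 - s) * X)"
        unfolding s(2) X_def by (simp add: scaleR_conv_of_real algebra_simps)
      then show ?thesis using \<open>X > 0\<close> s(1) by (simp add: inner_ii_mult)
    qed
    then show ?thesis using that[of "\<i> * v (Suc i)"] V by (simp add: inner_ii_mult)
  qed
qed

(* The point of the boundary of Q that z occupies in the placement centred at x whose boundary
   passes through z. *)
definition touch :: "complex \<Rightarrow> complex \<Rightarrow> complex" where
  "touch x z = (1 / qgauge (z - x)) *\<^sub>R (z - x)"

(* z lies on edge i of that placement. *)
definition on_edge :: "nat \<Rightarrow> complex \<Rightarrow> complex \<Rightarrow> bool" where
  "on_edge i x z \<longleftrightarrow> normal i \<bullet> (z - x) = qgauge (z - x) * edge_level"

lemma scaleR_qgauge_touch [simp]: "qgauge (z - x) *\<^sub>R touch x z = z - x"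
  unfolding touch_def using qgauge_pos[of "z - x"] by (cases "z = x") auto

lemma qgauge_touch: "z \<noteq> x \<Longrightarrow> qgauge (touch x z) = 1"
  unfolding touch_def using qgauge_pos[of "z - x"] by (simp add: qgauge_scaleR)

lemma touch_eqI:
  assumes "z \<noteq> x" "z = x + qgauge (z - x) *\<^sub>R u"
  shows "touch x z = u"
proof -
  have "touch x z = (1 / qgauge (z - x)) *\<^sub>R (qgauge (z - x) *\<^sub>R u)"
    unfolding touch_def using assms(2) by (metis add_diff_cancel_left')
  then show ?thesis using qgauge_pos[of "z - x"] assms(1) by simp
qed

lemma inner_touch: "z \<noteq> x \<Longrightarrow> a \<bullet> (z - x) = qgauge (z - x) * (a \<bullet> touch x z)"
  by (metis inner_scaleR_right scaleR_qgauge_touch)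

lemma on_edge_iff_touch:
  assumes "z \<noteq> x"
  shows "on_edge i x z \<longleftrightarrow> touch x z \<in> closed_segment (v i) (v (Suc i))"
proof -
  have "on_edge i x z \<longleftrightarrow> normal i \<bullet> touch x z = edge_level"
    unfolding on_edge_def inner_touch[OF assms] using qgauge_pos[of "z - x"] assms by auto
  also have "\<dots> \<longleftrightarrow> touch x z \<in> closed_segment (v i) (v (Suc i))"
    using unit_gauge_on_normal_line[OF qgauge_touch[OF assms]] closed_edge_on_normal_line by blast
  finally show ?thesis .
qed

lemma on_edge_exists:
  obtains i where "i < k" "on_edge i x z"
  using qgauge_attained unfolding on_edge_def by metis

lemma continuous_on_qgauge_diff: "continuous_on S (\<lambda>x. qgauge (z - x))"
  by (rule continuous_on_compose2[OF continuous_on_qgauge[of UNIV]])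
    (auto intro!: continuous_intros)

lemma closed_on_edge: "closed {x. on_edge i x z}"
  unfolding on_edge_def
  by (intro closed_Collect_eq continuous_intros continuous_on_qgauge_diff)

lemma inner_normal_lt_off_open_edge:
  assumes "z \<noteq> x" "touch x z \<in> open_segment (v i) (v (Suc i))" "m mod k \<noteq> i mod k"
  shows "normal m \<bullet> (z - x) < qgauge (z - x) * edge_level"
proof -
  have "touch x z \<in> Q" using assms(2) edge_subset_Q open_closed_segment by blast
  then have "normal m \<bullet> touch x z \<le> edge_level" by (rule inner_normal_le_on_Q)
  moreover have "normal m \<bullet> touch x z \<noteq> edge_level"
    using open_edge_on_normal_line_imp[OF assms(2)] assms(3) by metis
  ultimately show ?thesis
    unfolding inner_touch[OF assms(1)] using qgauge_pos[of "z - x"] assms(1) by simp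
qed

lemma vertex_touch_on_edge:
  assumes "z \<noteq> x" "on_edge i x z" "touch x z = v a"
  shows "touch x z = v i \<or> touch x z = v (Suc i)"
  using assms closed_edge_on_normal_line vtx_on_normal_line on_edge_iff_touch by metis

lemma open_edge_if_not_vertex:
  assumes "z \<noteq> x" "on_edge i x z" "\<And>a. touch x z \<noteq> v a"
  shows "touch x z \<in> open_segment (v i) (v (Suc i))"
  using assms on_edge_iff_touch unfolding open_segment_def by blast

lemma on_two_edges_imp_vertex:
  assumes "z \<noteq> x" "on_edge i x z" "on_edge i' x z" "i mod k \<noteq> i' mod k"
  shows "touch x z = v i \<or> touch x z = v (Suc i)"
proof -
  have "touch x z \<in> closed_segment (v i) (v (Suc i))" using assms(1,2) on_edge_iff_touch by blast
  moreover have "normal i' \<bullet> touch x z = edge_level"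
    using assms(1,3) on_edge_iff_touch closed_edge_on_normal_line by blast
  ultimately show ?thesis using assms(4) by (rule closed_edge_on_other_normal_line)
qed

lemma centers_beside_corner:
  assumes "z \<noteq> x0" "touch x0 z = v i \<or> touch x0 z = v (Suc i)"
  obtains A where "\<And>x. z \<noteq> x \<Longrightarrow> touch x z \<in> open_segment (v i) (v (Suc i)) \<Longrightarrow> A \<bullet> (x - x0) > 0"
proof -
  obtain A where A: "A \<bullet> touch x0 z = 0" "\<And>u. u \<in> open_segment (v i) (v (Suc i)) \<Longrightarrow> A \<bullet> u < 0"
    using vertex_beside_open_edge[OF assms(2)] by blast
  have "A \<bullet> (x - x0) > 0" if "z \<noteq> x" "touch x z \<in> open_segment (v i) (v (Suc i))" for x
  proof -
    have "A \<bullet> (x - x0) = A \<bullet> (z - x0) - A \<bullet> (z - x)" by (simp add: inner_diff_right)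
    also have "\<dots> = - (qgauge (z - x) * (A \<bullet> touch x z))"
      using inner_touch[OF assms(1)] inner_touch[OF that(1)] A(1) by simp
    finally show ?thesis
      using A(2)[OF that(2)] qgauge_pos[of "z - x"] that(1) by (simp add: mult_pos_neg)
  qed
  then show ?thesis by (rule that)
qed

lemma bisector_iff: "x \<in> bisector Q p q \<longleftrightarrow> qgauge (p - x) = qgauge (q - x)"
  unfolding bisector_def dQ_eq_qgauge by simp

lemma bisector_commute: "bisector Q q p = bisector Q p q"
  unfolding bisector_def by auto

lemma bisector_neq:
  assumes "p \<noteq> q" "x \<in> bisector Q p q"
  shows "p \<noteq> x" "q \<noteq> x"
proof -
  have "qgauge (p - x) = qgauge (q - x)" using assms(2) by (simp add: bisector_iff)
  then show "p \<noteq> x" "q \<noteq> x"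
    using assms(1) qgauge_pos[of "p - x"] qgauge_pos[of "q - x"] by auto
qed

lemma bisector_diff:
  assumes "x \<in> bisector Q p q"
  shows "q - p = qgauge (p - x) *\<^sub>R (touch x q - touch x p)"
proof -
  have "q - p = qgauge (q - x) *\<^sub>R touch x q - qgauge (p - x) *\<^sub>R touch x p" by simp
  then show ?thesis using assms unfolding bisector_iff by (metis scaleR_right_diff_distrib)
qed

lemma placement_touch_iff:
  assumes "z \<noteq> x"
  shows "z \<in> placement x (qgauge (z - x)) S \<longleftrightarrow> touch x z \<in> S"
proof -
  have "z \<in> placement x (qgauge (z - x)) S \<longleftrightarrow> (\<exists>u\<in>S. z = x + qgauge (z - x) *\<^sub>R u)"
    unfolding placement_def by auto
  also have "\<dots> \<longleftrightarrow> touch x z \<in> S"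
    using touch_eqI[OF assms]
    by (metis scaleR_qgauge_touch add_diff_cancel_left' diff_add_cancel add.commute)
  finally show ?thesis .
qed

lemma corner_at_iff:
  assumes "z \<noteq> x"
  shows "corner_at k c p q z x \<longleftrightarrow> x \<in> bisector Q p q \<and> (\<exists>a. touch x z = v a)"
proof -
  have "(\<exists>i<k. z = x + qgauge (z - x) *\<^sub>R v i) \<longleftrightarrow> (\<exists>a. touch x z = v a)"
  proof
    assume "\<exists>a. touch x z = v a"
    then obtain a where "touch x z = v a" ..
    then have "qgauge (z - x) *\<^sub>R v (a mod k) = z - x"
      using scaleR_qgauge_touch[of z x] by (simp add: vtx_mod)
    then have "z = x + qgauge (z - x) *\<^sub>R v (a mod k)" by (simp add: algebra_simps)
    moreover have "a mod k < k" using three_le_k by simp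
    ultimately show "\<exists>i<k. z = x + qgauge (z - x) *\<^sub>R v i" by blast
  qed (use touch_eqI[OF assms] in blast)
  then show ?thesis unfolding corner_at_def dQ_eq_qgauge by simp
qed

lemma edgelet_set_iff:
  assumes "p \<noteq> q"
  shows "x \<in> edgelet_set k c p q i j \<longleftrightarrow> x \<in> bisector Q p q
    \<and> touch x p \<in> open_segment (v i) (v (Suc i)) \<and> touch x q \<in> open_segment (v j) (v (Suc j))"
  unfolding edgelet_set_def dQ_eq_qgauge using bisector_neq[OF assms] placement_touch_iff by auto

lemma general_position_commute:
  assumes "general_position k c p q"
  shows "general_position k c q p"
proof -
  have "(\<exists>t. p - q = t *\<^sub>R d) \<longleftrightarrow> (\<exists>t. q - p = t *\<^sub>R d)" for d
    by (metis minus_diff_eq scaleR_minus_left)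
  then show ?thesis using assms unfolding general_position_def by auto
qed

lemma general_position_chord:
  assumes "general_position k c p q" "a mod k \<noteq> b mod k"
  shows "q - p \<noteq> t *\<^sub>R (v a - v b)"
proof
  assume "q - p = t *\<^sub>R (v a - v b)"
  then have "q - p = t *\<^sub>R (v (a mod k) - v (b mod k))" by (simp add: vtx_mod)
  moreover have "a mod k < k" "b mod k < k" using three_le_k by simp_all
  ultimately show False using assms unfolding general_position_def by blast
qed

lemma general_position_edge:
  "general_position k c p q \<Longrightarrow> q - p \<noteq> t *\<^sub>R (v (Suc i) - v i)"
  using general_position_chord Suc_mod_neq(1) by blast

lemma not_corner_at_both:
  assumes "general_position k c p q" "x \<in> bisector Q p q" "touch x p = v a" "touch x q = v b"
  shows False
proof -
  have diff: "q - p = qgauge (p - x) *\<^sub>R (v b - v a)"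
    using bisector_diff[OF assms(2)] assms(3,4) by simp
  have "p \<noteq> q" using assms(1) unfolding general_position_def by simp
  with diff have "v b \<noteq> v a" by auto
  then have "b mod k \<noteq> a mod k" by (metis vtx_mod)
  with diff show False using general_position_chord[OF assms(1)] by blast
qed

lemma not_on_same_edge:
  assumes "general_position k c p q" "x \<in> bisector Q p q" "on_edge i x p" "on_edge i x q"
  shows False
proof -
  have "p \<noteq> q" using assms(1) unfolding general_position_def by simp
  note neq = bisector_neq[OF this assms(2)]
  obtain s where tp: "touch x p = (1 - s) *\<^sub>R v i + s *\<^sub>R v (Suc i)"
    using assms(3) unfolding on_edge_iff_touch[OF neq(1)] by (auto simp: in_segment)
  obtain t where tq: "touch x q = (1 - t) *\<^sub>R v i + t *\<^sub>R v (Suc i)"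
    using assms(4) unfolding on_edge_iff_touch[OF neq(2)] by (auto simp: in_segment)
  have "touch x q - touch x p = (t - s) *\<^sub>R (v (Suc i) - v i)"
    unfolding tp tq by (simp add: algebra_simps)
  then have "q - p = (qgauge (p - x) * (t - s)) *\<^sub>R (v (Suc i) - v i)"
    using bisector_diff[OF assms(2)] by simp
  then show False using general_position_edge[OF assms(1)] by blast
qed

lemma corner_placement_unique:
  assumes gp: "general_position k c z w"
    and x: "x \<in> bisector Q z w" "touch x z = v a" "on_edge j x w"
    and y: "y \<in> bisector Q z w" "touch y z = v a" "on_edge j y w"
  shows "x = y"
proof -
  have "z \<noteq> w" using gp unfolding general_position_def by simp
  note nx = bisector_neq[OF this x(1)] and ny = bisector_neq[OF this y(1)]
  obtain t t' where t: "touch x w = v j + t *\<^sub>R (v (Suc j) - v j)"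
    and t': "touch y w = v j + t' *\<^sub>R (v (Suc j) - v j)"
    using x(3) y(3) nx(2) ny(2) on_edge_iff_touch closed_segment_param by metis
  have "w - z = qgauge (z - x) *\<^sub>R (v j - v a + t *\<^sub>R (v (Suc j) - v j))"
    using bisector_diff[OF x(1)] x(2) t by (simp add: algebra_simps)
  moreover have "w - z = qgauge (z - y) *\<^sub>R (v j - v a + t' *\<^sub>R (v (Suc j) - v j))"
    using bisector_diff[OF y(1)] y(2) t' by (simp add: algebra_simps)
  ultimately have "qgauge (z - x) = qgauge (z - y)"
    using general_position_edge[OF gp] by (rule scaled_line_points_eq)
  then have "z - x = z - y"
    using scaleR_qgauge_touch[of z x] scaleR_qgauge_touch[of z y] x(2) y(2) by simp
  then show "x = y" by simp
qed

(* Rules out two corner placements with z at the two ends of edge i and w inside edge j. *)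
lemma chords_from_adjacent_vertices:
  assumes ij: "i mod k \<noteq> j mod k" and "l > 0" "m > 0"
    and u: "u \<in> open_segment (v j) (v (Suc j))" and u': "u' \<in> open_segment (v j) (v (Suc j))"
  shows "l *\<^sub>R (u - v i) \<noteq> m *\<^sub>R (u' - v (Suc i))"
proof
  assume eq: "l *\<^sub>R (u - v i) = m *\<^sub>R (u' - v (Suc i))"
  obtain t t' where t: "0 < t" "t < 1" "u = (1 - t) *\<^sub>R v j + t *\<^sub>R v (Suc j)"
    and t': "0 < t'" "t' < 1" "u' = (1 - t') *\<^sub>R v j + t' *\<^sub>R v (Suc j)"
    using u u' by (auto simp: in_segment)
  \<comment> \<open>pairing eq with normal i and with normal j gives two relations that force l = m\<close>
  define A0 where "A0 = edge_level - normal i \<bullet> v j"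
  define A1 where "A1 = edge_level - normal i \<bullet> v (Suc j)"
  have "A0 \<ge> 0" "A1 \<ge> 0" unfolding A0_def A1_def using inner_normal_vtx_le by auto
  have "normal i \<bullet> (l *\<^sub>R (u - v i)) = normal i \<bullet> (m *\<^sub>R (u' - v (Suc i)))" using eq by simp
  then have E1: "l * ((1 - t) * A0 + t * A1) = m * ((1 - t') * A0 + t' * A1)"
    unfolding t t' A0_def A1_def by (simp add: inner_add_right inner_diff_right algebra_simps)
  have "normal j \<bullet> u = edge_level" "normal j \<bullet> u' = edge_level"
    using u u' closed_edge_on_normal_line open_closed_segment by blast+
  moreover have "normal j \<bullet> (l *\<^sub>R (u - v i)) = normal j \<bullet> (m *\<^sub>R (u' - v (Suc i)))"
    using eq by simp
  ultimately have E2: "l * A1 = m * A0"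
    using inner_normal_vtx_swap[of i j] unfolding A0_def A1_def
    by (simp add: inner_diff_right algebra_simps)
  have "A0 > 0"
  proof (rule ccontr)
    assume "\<not> A0 > 0"
    then have "A0 = 0" "A1 = 0" using \<open>A0 \<ge> 0\<close> E2 \<open>l > 0\<close> by auto
    then have "j mod k = i mod k" unfolding A0_def A1_def by (intro edge_on_normal_line_imp) auto
    then show False using ij by simp
  qed
  have "l * (l * ((1 - t) * A0 + t * A1)) = l * (m * ((1 - t') * A0 + t' * A1))" using E1 by simp
  then have "l * l * (1 - t) * A0 + t * l * (l * A1) = l * m * (1 - t') * A0 + m * t' * (l * A1)"
    by (simp add: algebra_simps)
  then have "(l - m) * (l * (1 - t) + m * t') * A0 = 0" unfolding E2 by (simp add: algebra_simps)
  moreover have "l * (1 - t) + m * t' > 0" using \<open>l > 0\<close> \<open>m > 0\<close> t t' by (simp add: add_pos_pos)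
  ultimately have "l = m" using \<open>A0 > 0\<close> by simp
  with eq have "u - v i = u' - v (Suc i)" using \<open>m > 0\<close> by simp
  then have "u' - u = v (Suc i) - v i" by (simp add: algebra_simps)
  then show False using open_edge_diff_neq_edge_vec[OF u' u] by blast
qed

lemma corners_on_closed_edgelet_unique:
  assumes gp: "general_position k c z w" and "i < k" "j < k"
    and x: "x \<in> bisector Q z w" "on_edge i x z" "on_edge j x w" "touch x z = v a"
      "touch x w \<in> open_segment (v j) (v (Suc j))"
    and y: "y \<in> bisector Q z w" "on_edge i y z" "on_edge j y w" "touch y z = v b"
      "touch y w \<in> open_segment (v j) (v (Suc j))"
  shows "x = y"
proof -
  have "z \<noteq> w" using gp unfolding general_position_def by simp
  note nx = bisector_neq[OF this x(1)] and ny = bisector_neq[OF this y(1)]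
  have "i mod k \<noteq> j mod k"
    using not_on_same_edge[OF gp x(1) x(2)] x(3) \<open>i < k\<close> \<open>j < k\<close> by auto
  have "touch x z = v i \<or> touch x z = v (Suc i)" "touch y z = v i \<or> touch y z = v (Suc i)"
    using vertex_touch_on_edge nx ny x y by blast+
  then consider "touch x z = touch y z"
    | "touch x z = v i" "touch y z = v (Suc i)" | "touch y z = v i" "touch x z = v (Suc i)"
    by auto
  then show ?thesis
  proof cases
    case 1
    then show ?thesis using corner_placement_unique[OF gp x(1,4,3) y(1) _ y(3)] x(4) by simp
  next
    case 2
    then have "qgauge (z - x) *\<^sub>R (touch x w - v i) = qgauge (z - y) *\<^sub>R (touch y w - v (Suc i))"
      using bisector_diff[OF x(1)] bisector_diff[OF y(1)] by simp
    then show ?thesis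
      using chords_from_adjacent_vertices[OF \<open>i mod k \<noteq> j mod k\<close> _ _ x(5) y(5)]
        qgauge_pos[of "z - x"] qgauge_pos[of "z - y"] nx ny by auto
  next
    case 3
    then have "qgauge (z - y) *\<^sub>R (touch y w - v i) = qgauge (z - x) *\<^sub>R (touch x w - v (Suc i))"
      using bisector_diff[OF x(1)] bisector_diff[OF y(1)] by simp
    then show ?thesis
      using chords_from_adjacent_vertices[OF \<open>i mod k \<noteq> j mod k\<close> _ _ y(5) x(5)]
        qgauge_pos[of "z - x"] qgauge_pos[of "z - y"] nx ny by auto
  qed
qed

end

section \<open>Edgelets and corners along the bisector\<close>

locale regular_kgon_pair = regular_kgon +
  fixes p q :: complex
  assumes general_position: "general_position k c p q"
begin

abbreviation B :: "complex set" where "B \<equiv> bisector Q p q"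

lemma p_neq_q: "p \<noteq> q"
  using general_position unfolding general_position_def by simp

lemma general_position_swapped: "general_position k c q p"
  using general_position by (rule general_position_commute)

lemma bisector_neq_points: "x \<in> B \<Longrightarrow> p \<noteq> x" "x \<in> B \<Longrightarrow> q \<noteq> x"
  using bisector_neq[OF p_neq_q] by auto

lemma corner_at_touch_iff:
  assumes "x \<in> B" "z \<in> {p, q}"
  shows "corner_at k c p q z x \<longleftrightarrow> (\<exists>a. touch x z = v a)"
  using assms corner_at_iff bisector_neq_points by auto

lemma not_corner_at_p_and_q: "\<not> (corner_at k c p q p x \<and> corner_at k c p q q x)"
proof
  assume corners: "corner_at k c p q p x \<and> corner_at k c p q q x"
  then have "x \<in> B" by (simp add: corner_at_def)
  with corners obtain a b where "touch x p = v a" "touch x q = v b"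
    using corner_at_touch_iff by blast
  with \<open>x \<in> B\<close> show False by (intro not_corner_at_both[OF general_position])
qed

definition closed_edgelet :: "nat \<Rightarrow> nat \<Rightarrow> complex set" where
  "closed_edgelet i j = {x \<in> B. on_edge i x p \<and> on_edge j x q}"

lemma closed_bisector: "closed B"
proof -
  have "B = {x. qgauge (p - x) = qgauge (q - x)}" by (auto simp: bisector_iff)
  then show ?thesis by (simp add: closed_Collect_eq continuous_on_qgauge_diff)
qed

lemma closed_closed_edgelet: "closed (closed_edgelet i j)"
proof -
  have "closed_edgelet i j = B \<inter> {x. on_edge i x p} \<inter> {x. on_edge j x q}"
    unfolding closed_edgelet_def by auto
  then show ?thesis using closed_bisector closed_on_edge by (simp add: closed_Int)
qed

lemma edgelet_subset_closed_edgelet: "edgelet_set k c p q i j \<subseteq> closed_edgelet i j"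
proof
  fix x assume "x \<in> edgelet_set k c p q i j"
  then have "x \<in> B" "touch x p \<in> closed_segment (v i) (v (Suc i))"
    "touch x q \<in> closed_segment (v j) (v (Suc j))"
    unfolding edgelet_set_iff[OF p_neq_q] using open_closed_segment by auto
  then show "x \<in> closed_edgelet i j"
    unfolding closed_edgelet_def using on_edge_iff_touch bisector_neq_points by auto
qed

lemma closure_edgelet_subset: "closure (edgelet_set k c p q i j) \<subseteq> closed_edgelet i j"
  using edgelet_subset_closed_edgelet closed_closed_edgelet by (rule closure_minimal)

lemma closed_edgelet_noncorner_imp_edgelet:
  assumes "x \<in> closed_edgelet i j" "\<not> corner_at k c p q p x" "\<not> corner_at k c p q q x"
  shows "x \<in> edgelet_set k c p q i j"
  using assms open_edge_if_not_vertex corner_at_touch_iff bisector_neq_points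
  unfolding edgelet_set_iff[OF p_neq_q] closed_edgelet_def by auto

lemma bisector_covered:
  assumes "x \<in> B"
  obtains i j where "i < k" "j < k" "x \<in> closed_edgelet i j"
proof -
  obtain i j where "i < k" "on_edge i x p" "j < k" "on_edge j x q" by (meson on_edge_exists)
  then show ?thesis using that assms unfolding closed_edgelet_def by blast
qed

lemma closed_edgelet_line:
  assumes "x \<in> closed_edgelet i j" "y \<in> closed_edgelet i j"
  shows "(x - y) \<bullet> (normal i - normal j) = 0"
proof -
  have "normal i \<bullet> (p - x) = normal j \<bullet> (q - x)" "normal i \<bullet> (p - y) = normal j \<bullet> (q - y)"
    using assms unfolding closed_edgelet_def on_edge_def bisector_iff by auto
  then show ?thesis by (simp add: inner_diff_right inner_diff_left inner_commute algebra_simps)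
qed

lemma closed_edgelet_locally:
  assumes x: "x \<in> closed_edgelet i j" "i < k" "j < k"
    and nc: "\<not> corner_at k c p q p x" "\<not> corner_at k c p q q x"
  obtains e where "e > 0" "\<And>y. y \<in> B \<Longrightarrow> dist y x < e \<Longrightarrow> y \<in> closed_edgelet i j"
proof -
  \<comment> \<open>away from corners, all normals other than i at p and j at q are strictly inactive,
    which is an open condition\<close>
  define off_edge where
    "off_edge z n = (\<Inter>m\<in>{..<k} - {n}. {y. normal m \<bullet> (z - y) < qgauge (z - y) * edge_level})"
    for z n
  have "open (off_edge z n)" for z n
    unfolding off_edge_def
    by (intro open_INT ballI open_Collect_less continuous_intros continuous_on_qgauge_diff) auto
  then have "open (off_edge p i \<inter> off_edge q j)" by auto
  have xB: "x \<in> B" using x(1) by (simp add: closed_edgelet_def)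
  note neq = bisector_neq_points[OF xB]
  have "touch x p \<in> open_segment (v i) (v (Suc i))" "touch x q \<in> open_segment (v j) (v (Suc j))"
    using x(1) nc xB neq open_edge_if_not_vertex corner_at_touch_iff
    unfolding closed_edgelet_def by auto
  then have "x \<in> off_edge p i \<inter> off_edge q j"
    unfolding off_edge_def using inner_normal_lt_off_open_edge neq x(2,3) by auto
  with \<open>open (off_edge p i \<inter> off_edge q j)\<close> obtain e
    where "e > 0" and e: "ball x e \<subseteq> off_edge p i \<inter> off_edge q j"
    using open_contains_ball by blast
  have edge_unique: "n' = n" if "n' < k" "on_edge n' y z" "y \<in> off_edge z n" for n n' y z
  proof (rule ccontr)
    assume "n' \<noteq> n"
    with that(1,3) have "normal n' \<bullet> (z - y) < qgauge (z - y) * edge_level"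
      unfolding off_edge_def by blast
    with that(2) show False unfolding on_edge_def by simp
  qed
  have "y \<in> closed_edgelet i j" if "y \<in> B" "dist y x < e" for y
  proof -
    obtain i' j' where "i' < k" "on_edge i' y p" "j' < k" "on_edge j' y q" by (meson on_edge_exists)
    moreover have "y \<in> off_edge p i" "y \<in> off_edge q j" using e that(2) by (auto simp: dist_commute)
    ultimately show ?thesis using edge_unique \<open>y \<in> B\<close> unfolding closed_edgelet_def by blast
  qed
  with \<open>e > 0\<close> show ?thesis by (rule that)
qed

lemma path_in_one_edgelet:
  fixes \<gamma> :: "real \<Rightarrow> complex"
  assumes cont: "continuous_on {a<..<b} \<gamma>" and "a < b"
    and inB: "\<And>t. t \<in> {a<..<b} \<Longrightarrow> \<gamma> t \<in> B"
    and nc: "\<And>t. t \<in> {a<..<b} \<Longrightarrow> \<not> corner_at k c p q p (\<gamma> t) \<and> \<not> corner_at k c p q q (\<gamma> t)"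
  obtains i j where "i < k" "j < k" "\<And>t. t \<in> {a<..<b} \<Longrightarrow> \<gamma> t \<in> edgelet_set k c p q i j"
proof -
  define I where "I = {a<..<b}"
  have mid: "(a + b) / 2 \<in> I" unfolding I_def using \<open>a < b\<close> by simp
  then obtain i j where ij: "i < k" "j < k" "\<gamma> ((a + b) / 2) \<in> closed_edgelet i j"
    using bisector_covered inB unfolding I_def by metis
  define S where "S = I \<inter> \<gamma> -` closed_edgelet i j"
  have "closedin (top_of_set I) S"
    unfolding S_def I_def by (rule continuous_closedin_preimage[OF cont closed_closed_edgelet])
  moreover have "openin (top_of_set I) S"
    unfolding openin_euclidean_subtopology_iff
  proof (intro conjI ballI)
    show "S \<subseteq> I" unfolding S_def by auto
    fix t assume "t \<in> S"
    then have t: "t \<in> I" "\<gamma> t \<in> closed_edgelet i j" unfolding S_def by auto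
    obtain e where e: "e > 0" "\<And>y. y \<in> B \<Longrightarrow> dist y (\<gamma> t) < e \<Longrightarrow> y \<in> closed_edgelet i j"
      using closed_edgelet_locally[OF t(2) ij(1,2)] nc t(1) unfolding I_def by blast
    obtain d where "d > 0" "\<forall>t'\<in>I. dist t' t < d \<longrightarrow> dist (\<gamma> t') (\<gamma> t) < e"
      using cont t(1) e(1) unfolding I_def continuous_on_iff by blast
    then show "\<exists>d>0. \<forall>t'\<in>I. dist t' t < d \<longrightarrow> t' \<in> S"
      using e inB unfolding S_def I_def by auto
  qed
  moreover have "connected I" unfolding I_def by simp
  ultimately have "S = I" using mid ij(3) unfolding connected_clopen S_def by blast
  then have "\<gamma> t \<in> edgelet_set k c p q i j" if "t \<in> I" for t
    using that nc closed_edgelet_noncorner_imp_edgelet unfolding S_def I_def by blast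
  then show ?thesis using that ij(1,2) unfolding I_def by blast
qed

lemma breakpoint_imp_one_corner:
  assumes "breakpoint k c p q x"
  shows "corner_at k c p q p x \<noteq> corner_at k c p q q x"
proof -
  obtain i1 j1 i2 j2 where ij: "i1 < k" "j1 < k" "i2 < k" "j2 < k"
    "edgelet_set k c p q i1 j1 \<noteq> edgelet_set k c p q i2 j2"
    "x \<in> closure (edgelet_set k c p q i1 j1)" "x \<in> closure (edgelet_set k c p q i2 j2)"
    using assms unfolding breakpoint_def edgelets_def by blast
  then have x1: "x \<in> closed_edgelet i1 j1" and x2: "x \<in> closed_edgelet i2 j2"
    using closure_edgelet_subset by blast+
  then have xB: "x \<in> B" by (simp add: closed_edgelet_def)
  note neq = bisector_neq_points[OF xB]
  have "(\<exists>a. touch x p = v a) \<or> (\<exists>a. touch x q = v a)"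
  proof (cases "i1 = i2")
    case False
    then have "i1 mod k \<noteq> i2 mod k" using ij(1,3) by simp
    then have "touch x p = v i1 \<or> touch x p = v (Suc i1)"
      using on_two_edges_imp_vertex[OF neq(1)] x1 x2 unfolding closed_edgelet_def by blast
    then show ?thesis by blast
  next
    case True
    then have "j1 \<noteq> j2" using ij(5) by auto
    then have "j1 mod k \<noteq> j2 mod k" using ij(2,4) by simp
    then have "touch x q = v j1 \<or> touch x q = v (Suc j1)"
      using on_two_edges_imp_vertex[OF neq(2)] x1 x2 unfolding closed_edgelet_def by blast
    then show ?thesis by blast
  qed
  then show ?thesis using corner_at_touch_iff[OF xB] not_corner_at_p_and_q by auto
qed

lemma finite_corners: "finite {x. corner_at k c p q p x \<or> corner_at k c p q q x}"
proof -
  let ?C = "\<lambda>z w a j. {x \<in> B. touch x z = v a \<and> on_edge j x w}"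
  have "{x. corner_at k c p q p x \<or> corner_at k c p q q x}
      \<subseteq> (\<Union>a<k. \<Union>j<k. ?C p q a j) \<union> (\<Union>a<k. \<Union>j<k. ?C q p a j)"
  proof
    fix x assume "x \<in> {x. corner_at k c p q p x \<or> corner_at k c p q q x}"
    moreover from this have xB: "x \<in> B" by (auto simp: corner_at_def)
    ultimately obtain z w a where zw: "(z = p \<and> w = q) \<or> (z = q \<and> w = p)" "touch x z = v a"
      using corner_at_touch_iff by blast
    moreover obtain j where "j < k" "on_edge j x w" by (rule on_edge_exists)
    moreover have "a mod k < k" "touch x z = v (a mod k)"
      using three_le_k zw(2) by (simp_all add: vtx_mod)
    ultimately show "x \<in> (\<Union>a<k. \<Union>j<k. ?C p q a j) \<union> (\<Union>a<k. \<Union>j<k. ?C q p a j)"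
      using xB by blast
  qed
  moreover have "finite (?C p q a j)" "finite (?C q p a j)" for a j
    using corner_placement_unique[OF general_position]
      corner_placement_unique[OF general_position_swapped]
    by (auto intro!: finite_if_subsingleton simp: bisector_commute)
  then have "finite ((\<Union>a<k. \<Union>j<k. ?C p q a j) \<union> (\<Union>a<k. \<Union>j<k. ?C q p a j))" by auto
  ultimately show ?thesis by (rule finite_subset)
qed

lemma corners_alternate_on_closed_edgelet:
  assumes x: "x \<in> closed_edgelet i j" and y: "y \<in> closed_edgelet i j" and ij: "i < k" "j < k"
    and "x \<noteq> y"
    and "corner_at k c p q p x \<noteq> corner_at k c p q q x"
    and "corner_at k c p q p y \<noteq> corner_at k c p q q y"
  shows "corner_at k c p q p x \<longleftrightarrow> corner_at k c p q q y"
proof -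
  have B: "x \<in> B" "y \<in> B" and edges: "on_edge i x p" "on_edge j x q" "on_edge i y p" "on_edge j y q"
    using x y by (simp_all add: closed_edgelet_def)
  note open_edge = open_edge_if_not_vertex[OF bisector_neq_points(1)]
    open_edge_if_not_vertex[OF bisector_neq_points(2)]
  have "x = y" if "corner_at k c p q p x" "corner_at k c p q p y"
    "\<not> corner_at k c p q q x" "\<not> corner_at k c p q q y"
    using that corners_on_closed_edgelet_unique[OF general_position ij, of x _ y] B edges
      corner_at_touch_iff open_edge by (metis insertI1 insertI2)
  moreover have "x = y" if "corner_at k c p q q x" "corner_at k c p q q y"
    "\<not> corner_at k c p q p x" "\<not> corner_at k c p q p y"
    using that corners_on_closed_edgelet_unique[OF general_position_swapped ij(2,1), of x _ y] B edges
      corner_at_touch_iff open_edge bisector_commute by (metis insertI1 insertI2)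
  ultimately show ?thesis using assms by blast
qed

lemma corners_isolated_on_arc:
  fixes \<gamma> :: "real \<Rightarrow> complex"
  assumes inj: "inj_on \<gamma> {0..1}" and t0: "t0 \<in> {0<..<1}"
  obtains \<delta> where "0 < \<delta>" "0 \<le> t0 - \<delta>" "t0 + \<delta> \<le> 1"
    "\<And>t. t \<in> {t0 - \<delta><..<t0 + \<delta>} \<Longrightarrow> t \<noteq> t0
      \<Longrightarrow> \<not> corner_at k c p q p (\<gamma> t) \<and> \<not> corner_at k c p q q (\<gamma> t)"
proof -
  define T where "T = \<gamma> -` {x. corner_at k c p q p x \<or> corner_at k c p q q x} \<inter> {0<..<1}"
  have "inj_on \<gamma> {0<..<1}" using inj by (rule inj_on_subset) auto
  then have "finite T" unfolding T_def by (rule finite_vimage_IntI[OF finite_corners])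
  then obtain d where "d > 0" and d: "\<And>t. t \<in> T \<Longrightarrow> t \<noteq> t0 \<Longrightarrow> d \<le> dist t0 t"
    using finite_set_avoid[of T t0] by blast
  define \<delta> where "\<delta> = min d (min t0 (1 - t0))"
  have \<delta>: "0 < \<delta>" "0 \<le> t0 - \<delta>" "t0 + \<delta> \<le> 1" using \<open>d > 0\<close> t0 unfolding \<delta>_def by auto
  moreover have "\<not> corner_at k c p q p (\<gamma> t) \<and> \<not> corner_at k c p q q (\<gamma> t)"
    if "t \<in> {t0 - \<delta><..<t0 + \<delta>}" "t \<noteq> t0" for t
  proof -
    have "t \<notin> T" using d[of t] that unfolding \<delta>_def by (auto simp: dist_real_def)
    then show ?thesis using that \<delta> unfolding T_def by auto
  qed
  ultimately show ?thesis by (rule that)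
qed

lemma edgelet_beside_corner:
  assumes z: "z \<in> closed_edgelet i j" and corner: "corner_at k c p q p z \<or> corner_at k c p q q z"
  obtains A where "\<And>x. x \<in> edgelet_set k c p q i j \<Longrightarrow> A \<bullet> (x - z) > 0"
proof -
  have zB: "z \<in> B" using z by (simp add: closed_edgelet_def)
  note neq = bisector_neq_points[OF zB]
  show ?thesis
  proof (cases "corner_at k c p q p z")
    case True
    then obtain a where "touch z p = v a" using corner_at_touch_iff[OF zB] by blast
    then have "touch z p = v i \<or> touch z p = v (Suc i)"
      using vertex_touch_on_edge neq(1) z by (auto simp: closed_edgelet_def)
    then obtain A where "\<And>x. p \<noteq> x \<Longrightarrow> touch x p \<in> open_segment (v i) (v (Suc i)) \<Longrightarrow> A \<bullet> (x - z) > 0"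
      using centers_beside_corner neq(1) by metis
    then show ?thesis using that bisector_neq_points(1) by (auto simp: edgelet_set_iff[OF p_neq_q])
  next
    case False
    then obtain a where "touch z q = v a" using corner corner_at_touch_iff[OF zB] by blast
    then have "touch z q = v j \<or> touch z q = v (Suc j)"
      using vertex_touch_on_edge neq(2) z by (auto simp: closed_edgelet_def)
    then obtain A where "\<And>x. q \<noteq> x \<Longrightarrow> touch x q \<in> open_segment (v j) (v (Suc j)) \<Longrightarrow> A \<bullet> (x - z) > 0"
      using centers_beside_corner neq(2) by metis
    then show ?thesis using that bisector_neq_points(2) by (auto simp: edgelet_set_iff[OF p_neq_q])
  qed
qed

lemma corner_not_inside_edgelet:
  fixes \<gamma> :: "real \<Rightarrow> complex"
  assumes cont: "continuous_on {a..b} \<gamma>" and inj: "inj_on \<gamma> {a..b}" and t0: "a < t0" "t0 < b"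
    and ij: "i < k" "j < k"
    and E: "\<And>t. t \<in> {a..b} \<Longrightarrow> t \<noteq> t0 \<Longrightarrow> \<gamma> t \<in> edgelet_set k c p q i j"
    and corner: "corner_at k c p q p (\<gamma> t0) \<or> corner_at k c p q q (\<gamma> t0)"
  shows False
proof -
  have "\<gamma> t0 \<in> closure (edgelet_set k c p q i j)"
    using cont t0 E by (intro path_segment_in_closure[of a t0]) (auto intro: continuous_on_subset)
  then have z: "\<gamma> t0 \<in> closed_edgelet i j" using closure_edgelet_subset by blast
  then obtain A where A: "\<And>x. x \<in> edgelet_set k c p q i j \<Longrightarrow> A \<bullet> (x - \<gamma> t0) > 0"
    using edgelet_beside_corner corner by blast
  have "i \<noteq> j" using z not_on_same_edge[OF general_position] by (auto simp: closed_edgelet_def)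
  then have "normal i - normal j \<noteq> 0" using normal_neq ij by simp
  moreover have "(\<gamma> t - \<gamma> t0) \<bullet> (normal i - normal j) = 0" if "t \<in> {a..b}" for t
    using z E[OF that] edgelet_subset_closed_edgelet closed_edgelet_line[OF _ z]
    by (cases "t = t0") auto
  ultimately show False
    using injective_path_not_one_sided_on_line[OF cont inj t0] A E by blast
qed

lemma punctured_segment_in_one_edgelet:
  fixes \<gamma> :: "real \<Rightarrow> complex"
  assumes cont: "continuous_on {0..1} \<gamma>" and inB: "\<gamma> ` {0..1} \<subseteq> B"
    and not_break: "\<not> breakpoint k c p q (\<gamma> t0)"
    and \<delta>: "0 < \<delta>" "0 \<le> t0 - \<delta>" "t0 + \<delta> \<le> 1"
    and nc: "\<And>t. t \<in> {t0 - \<delta><..<t0 + \<delta>} \<Longrightarrow> t \<noteq> t0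
      \<Longrightarrow> \<not> corner_at k c p q p (\<gamma> t) \<and> \<not> corner_at k c p q q (\<gamma> t)"
  obtains i j where "i < k" "j < k"
    "\<And>t. t \<in> {t0 - \<delta><..<t0 + \<delta>} \<Longrightarrow> t \<noteq> t0 \<Longrightarrow> \<gamma> t \<in> edgelet_set k c p q i j"
proof -
  have side: "\<exists>i<k. \<exists>j<k. \<forall>t\<in>{a<..<b}. \<gamma> t \<in> edgelet_set k c p q i j"
    if ab: "t0 - \<delta> \<le> a" "a < b" "b \<le> t0 + \<delta>" "t0 \<notin> {a<..<b}" for a b
  proof -
    have "continuous_on {a<..<b} \<gamma>" using cont by (rule continuous_on_subset) (use ab \<delta> in auto)
    moreover have "\<gamma> t \<in> B" if "t \<in> {a<..<b}" for t using inB that ab \<delta> by auto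
    moreover have "\<not> corner_at k c p q p (\<gamma> t) \<and> \<not> corner_at k c p q q (\<gamma> t)"
      if "t \<in> {a<..<b}" for t
      using nc that ab by auto
    ultimately show ?thesis using path_in_one_edgelet \<open>a < b\<close> by metis
  qed
  obtain i1 j1 i2 j2 where ij: "i1 < k" "j1 < k" "i2 < k" "j2 < k"
    and E1: "\<forall>t\<in>{t0 - \<delta><..<t0}. \<gamma> t \<in> edgelet_set k c p q i1 j1"
    and E2: "\<forall>t\<in>{t0<..<t0 + \<delta>}. \<gamma> t \<in> edgelet_set k c p q i2 j2"
    using side[of "t0 - \<delta>" t0] side[of t0 "t0 + \<delta>"] \<delta> by auto
  have "\<gamma> t0 \<in> closure (edgelet_set k c p q i1 j1)"
    using E1 \<delta> cont
    by (intro path_segment_in_closure[of "t0 - \<delta>" t0]) (auto intro: continuous_on_subset)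
  moreover have "\<gamma> t0 \<in> closure (edgelet_set k c p q i2 j2)"
    using E2 \<delta> cont
    by (intro path_segment_in_closure[of t0 "t0 + \<delta>"]) (auto intro: continuous_on_subset)
  moreover have "\<gamma> (t0 - \<delta>/2) \<in> edgelet_set k c p q i1 j1"
    "\<gamma> (t0 + \<delta>/2) \<in> edgelet_set k c p q i2 j2"
    using E1 E2 \<delta> by auto
  then have "edgelet_set k c p q i1 j1 \<in> edgelets k c p q"
    "edgelet_set k c p q i2 j2 \<in> edgelets k c p q"
    using ij unfolding edgelets_def by blast+
  ultimately have "edgelet_set k c p q i1 j1 = edgelet_set k c p q i2 j2"
    using not_break unfolding breakpoint_def by blast
  then show ?thesis
    using that[OF ij(1,2)] E1 E2 by (metis greaterThanLessThan_iff linorder_neqE_linordered_idom)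
qed

lemma arc_avoids_corners:
  fixes \<gamma> :: "real \<Rightarrow> complex"
  assumes arc: "arc \<gamma>" and img: "path_image \<gamma> \<subseteq> B"
    and no_break: "\<forall>t\<in>{0<..<1}. \<not> breakpoint k c p q (\<gamma> t)" and t0: "t0 \<in> {0<..<1}"
  shows "\<not> corner_at k c p q p (\<gamma> t0) \<and> \<not> corner_at k c p q q (\<gamma> t0)"
proof (rule ccontr)
  assume corner: "\<not> (\<not> corner_at k c p q p (\<gamma> t0) \<and> \<not> corner_at k c p q q (\<gamma> t0))"
  have cont: "continuous_on {0..1} \<gamma>" and inj: "inj_on \<gamma> {0..1}"
    using arc unfolding arc_def path_def by auto
  obtain \<delta> where \<delta>: "0 < \<delta>" "0 \<le> t0 - \<delta>" "t0 + \<delta> \<le> 1"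
    and nc: "\<And>t. t \<in> {t0 - \<delta><..<t0 + \<delta>} \<Longrightarrow> t \<noteq> t0
      \<Longrightarrow> \<not> corner_at k c p q p (\<gamma> t) \<and> \<not> corner_at k c p q q (\<gamma> t)"
    using corners_isolated_on_arc[OF inj t0] by blast
  obtain i j where ij: "i < k" "j < k"
    and E: "\<And>t. t \<in> {t0 - \<delta><..<t0 + \<delta>} \<Longrightarrow> t \<noteq> t0 \<Longrightarrow> \<gamma> t \<in> edgelet_set k c p q i j"
    using punctured_segment_in_one_edgelet[OF cont _ _ \<delta> nc] img no_break t0
    unfolding path_image_def by blast
  show False
  proof (rule corner_not_inside_edgelet[of "t0 - \<delta>/2" "t0 + \<delta>/2" \<gamma> t0 i j])
    show "continuous_on {t0 - \<delta>/2..t0 + \<delta>/2} \<gamma>" "inj_on \<gamma> {t0 - \<delta>/2..t0 + \<delta>/2}"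
      using cont inj \<delta> by (auto intro: continuous_on_subset inj_on_subset)
  qed (use \<delta> ij corner E in auto)
qed

lemma breakpoints_alternate_along_arc:
  fixes \<gamma> :: "real \<Rightarrow> complex"
  assumes bx: "breakpoint k c p q x" and by': "breakpoint k c p q y" and "x \<noteq> y"
    and arc: "arc \<gamma>" "pathstart \<gamma> = x" "pathfinish \<gamma> = y" and img: "path_image \<gamma> \<subseteq> B"
    and no_break: "\<forall>t\<in>{0<..<1}. \<not> breakpoint k c p q (\<gamma> t)"
  shows "corner_at k c p q p x \<longleftrightarrow> corner_at k c p q q y"
proof -
  have cont: "continuous_on {0..1} \<gamma>" using arc unfolding arc_def path_def by auto
  have "continuous_on {0<..<1} \<gamma>" using cont by (rule continuous_on_subset) auto
  moreover have "\<gamma> t \<in> B" if "t \<in> {0<..<1}" for t using img that unfolding path_image_def by auto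
  ultimately obtain i j where ij: "i < k" "j < k"
    "\<And>t. t \<in> {0<..<1} \<Longrightarrow> \<gamma> t \<in> edgelet_set k c p q i j"
    using path_in_one_edgelet arc_avoids_corners[OF arc(1) img no_break] zero_less_one by blast
  have "\<gamma> 0 \<in> closure (edgelet_set k c p q i j)" "\<gamma> 1 \<in> closure (edgelet_set k c p q i j)"
    using path_segment_in_closure[OF cont _ ij(3)] by auto
  then have "x \<in> closed_edgelet i j" "y \<in> closed_edgelet i j"
    using closure_edgelet_subset arc(2,3) unfolding pathstart_def pathfinish_def by blast+
  then show ?thesis
    using corners_alternate_on_closed_edgelet ij(1,2) \<open>x \<noteq> y\<close>
      breakpoint_imp_one_corner[OF bx] breakpoint_imp_one_corner[OF by'] by blast
qed

end

theorem lemma5: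
  fixes k :: nat and c p q :: complex
  assumes "k \<ge> 3" and "c \<noteq> 0" and "general_position k c p q"
  shows "(\<forall>x. breakpoint k c p q x \<longrightarrow> (corner_at k c p q p x \<noteq> corner_at k c p q q x))
     \<and> (\<forall>x y \<gamma>. breakpoint k c p q x \<and> breakpoint k c p q y \<and> x \<noteq> y
           \<and> arc \<gamma> \<and> pathstart \<gamma> = x \<and> pathfinish \<gamma> = y
           \<and> path_image \<gamma> \<subseteq> bisector (regular_polygon k c) p q
           \<and> (\<forall>t\<in>{0<..<1}. \<not> breakpoint k c p q (\<gamma> t))
         \<longrightarrow> (corner_at k c p q p x \<longleftrightarrow> corner_at k c p q q y))"
proof -
  interpret regular_kgon_pair k c p q
    using assms by unfold_locales
  show ?thesis
    using breakpoint_imp_one_corner breakpoints_alternate_along_arc by blast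
qed

end
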